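(* The extended Schr\"odinger-Virasoro algebra $\hat{\mathfrak{so}}$ has no nontrivial $\frac12$-derivations; i.e., every $\frac12$-derivation of $\hat{\mathfrak{so}}$ is a scalar multiple of the identity map.
   Context: The extended Schr\"odinger-Virasoro algebra $\hat{\mathfrak{so}}$ is the complex Lie algebra with basis $\{L_n,M_n,N_n,Y_{n+\frac12},C_L,C_{LN},C_N\mid n\in\mathbb{Z}\}$ and brackets (all others zero, $C_L,C_{LN},C_N$ central): $[L_m,L_n]=(n-m)L_{m+n}+\delta_{m+n,0}\frac{m^3-m}{12}C_L$, $[L_m,M_n]=nM_{m+n}$, $[L_m,N_n]=nN_{m+n}+\delta_{m+n,0}(m^2-m)C_{LN}$, $[N_m,M_n]=2M_{m+n}$, $[L_m,Y_{n+\frac12}]=(n+\frac{1-m}{2})Y_{m+n+\frac12}$, $[N_m,Y_{n+\frac12}]=Y_{m+n+\frac12}$, $[Y_{m+\frac12},Y_{n+\frac12}]=(m-n)M_{m+n+1}$, $[N_m,N_n]=n\delta_{m+n,0}C_N$, for all $m,n\in\mathbb{Z}$. A $\frac12$-derivation of a Lie algebra $L$ is a linear map $\varphi:L\to L$ with $\varphi([x,y])=\frac12([\varphi(x),y]+[x,\varphi(y)])$ for all $x,y$; it is trivial if it is multiplication by a scalar. *)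

theory Defs
  imports Complex_Main
begin

text \<open>Basis of the extended Schroedinger-Virasoro algebra.
  SY n stands for Y_{n+1/2}.\<close>
datatype sv_basis = SL int | SM int | SN int | SY int | CL | CLN | CN

definition sv_space :: "(sv_basis \<Rightarrow> complex) set" where
  "sv_space = {x. finite {b. x b \<noteq> 0}}"

definition supp_sv :: "(sv_basis \<Rightarrow> complex) \<Rightarrow> sv_basis set" where
  "supp_sv x = {b. x b \<noteq> 0}"

fun brb :: "sv_basis \<Rightarrow> sv_basis \<Rightarrow> sv_basis \<Rightarrow> complex" where
  "brb (SL m) (SL n) = (\<lambda>x. (if x = SL (m+n) then of_int (n - m) else 0)
      + (if m + n = 0 \<and> x = CL then of_int (m^3 - m) / 12 else 0))"
| "brb (SL m) (SM n) = (\<lambda>x. if x = SM (m+n) then of_int n else 0)"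
| "brb (SM n) (SL m) = (\<lambda>x. if x = SM (m+n) then - of_int n else 0)"
| "brb (SL m) (SN n) = (\<lambda>x. (if x = SN (m+n) then of_int n else 0)
      + (if m + n = 0 \<and> x = CLN then of_int (m^2 - m) else 0))"
| "brb (SN n) (SL m) = (\<lambda>x. - ((if x = SN (m+n) then of_int n else 0)
      + (if m + n = 0 \<and> x = CLN then of_int (m^2 - m) else 0)))"
| "brb (SN m) (SM n) = (\<lambda>x. if x = SM (m+n) then 2 else 0)"
| "brb (SM n) (SN m) = (\<lambda>x. if x = SM (m+n) then -2 else 0)"
| "brb (SL m) (SY n) = (\<lambda>x. if x = SY (m+n) then of_int n + (1 - of_int m) / 2 else 0)"
| "brb (SY n) (SL m) = (\<lambda>x. if x = SY (m+n) then - (of_int n + (1 - of_int m) / 2) else 0)"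
| "brb (SN m) (SY n) = (\<lambda>x. if x = SY (m+n) then 1 else 0)"
| "brb (SY n) (SN m) = (\<lambda>x. if x = SY (m+n) then -1 else 0)"
| "brb (SY m) (SY n) = (\<lambda>x. if x = SM (m+n+1) then of_int (m - n) else 0)"
| "brb (SN m) (SN n) = (\<lambda>x. if m + n = 0 \<and> x = CN then of_int n else 0)"
| "brb _ _ = (\<lambda>x. 0)"

definition sv_bracket :: "(sv_basis \<Rightarrow> complex) \<Rightarrow> (sv_basis \<Rightarrow> complex) \<Rightarrow> (sv_basis \<Rightarrow> complex)" where
  "sv_bracket x y = (\<lambda>c. \<Sum>a\<in>supp_sv x. \<Sum>b\<in>supp_sv y. x a * y b * brb a b c)"

definition sv_linear :: "((sv_basis \<Rightarrow> complex) \<Rightarrow> (sv_basis \<Rightarrow> complex)) \<Rightarrow> bool" where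
  "sv_linear \<phi> \<longleftrightarrow> (\<forall>x\<in>sv_space. \<phi> x \<in> sv_space)
     \<and> (\<forall>x\<in>sv_space. \<forall>y\<in>sv_space. \<phi> (\<lambda>b. x b + y b) = (\<lambda>b. \<phi> x b + \<phi> y b))
     \<and> (\<forall>c. \<forall>x\<in>sv_space. \<phi> (\<lambda>b. c * x b) = (\<lambda>b. c * \<phi> x b))"

definition half_derivation :: "((sv_basis \<Rightarrow> complex) \<Rightarrow> (sv_basis \<Rightarrow> complex)) \<Rightarrow> bool" where
  "half_derivation \<phi> \<longleftrightarrow> sv_linear \<phi> \<and>
     (\<forall>x\<in>sv_space. \<forall>y\<in>sv_space.
        \<phi> (sv_bracket x y) = (\<lambda>c. (sv_bracket (\<phi> x) y c + sv_bracket x (\<phi> y) c) / 2))"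

end

theory Submission
  imports Defs
begin

text \<open>Every basis vector is an eigenvector of ad L_0, with eigenvalue its degree (n for L_n, M_n,
  N_n, n + 1/2 for Y_{n+1/2}, 0 for the central elements). Comparing coefficients in the identity
  \<phi>[a, b] = ([\<phi> a, b] + [a, \<phi> b]) / 2 for a few test brackets first shows \<phi> L_0 = \<alpha> L_0. Then,
  for a basis vector x of degree d, the identity with a = L_0 shows that \<phi> x has no components
  outside degrees d and 2d, and that its degree-d part is \<alpha> x. For d \<noteq> 0 the degree-2d
  components are killed by the identity for the bracket [L_{4d}, x], on whose factors \<phi> is already
  known. Each basis vector of degree 0 is a component of a bracket of vectors on which \<phi> is \<alpha>,
  whose other component is already known to be scaled by \<alpha> as well.\<close>

definition sv_unit :: "sv_basis \<Rightarrow> sv_basis \<Rightarrow> complex" where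
  "sv_unit b = (\<lambda>v. if v = b then 1 else 0)"

text \<open>Twice the degree, so that Y_{n+1/2} also gets an integer.\<close>
fun twice_degree :: "sv_basis \<Rightarrow> int" where
  "twice_degree (SL n) = 2 * n"
| "twice_degree (SM n) = 2 * n"
| "twice_degree (SN n) = 2 * n"
| "twice_degree (SY n) = 2 * n + 1"
| "twice_degree CL = 0"
| "twice_degree CLN = 0"
| "twice_degree CN = 0"

lemma sv_basis_all:
  "(\<forall>x. P x) \<longleftrightarrow> (\<forall>n. P (SL n)) \<and> (\<forall>n. P (SM n)) \<and> (\<forall>n. P (SN n)) \<and> (\<forall>n. P (SY n))
     \<and> P CL \<and> P CLN \<and> P CN"
  by (metis sv_basis.exhaust)

lemma sv_unit_apply: "sv_unit b v = (if v = b then 1 else 0)"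
  by (simp add: sv_unit_def)

lemma supp_sv_unit: "supp_sv (sv_unit b) = {b}"
  by (auto simp: supp_sv_def sv_unit_def)

lemma sv_unit_in_space: "sv_unit b \<in> sv_space"
  by (simp add: sv_space_def supp_sv_unit[unfolded supp_sv_def])

lemma finite_supp_sv: "x \<in> sv_space \<Longrightarrow> finite (supp_sv x)"
  by (simp add: sv_space_def supp_sv_def)

lemma sv_space_add: "x \<in> sv_space \<Longrightarrow> y \<in> sv_space \<Longrightarrow> (\<lambda>v. x v + y v) \<in> sv_space"
proof -
  assume "x \<in> sv_space" "y \<in> sv_space"
  moreover have "{b. x b + y b \<noteq> 0} \<subseteq> {b. x b \<noteq> 0} \<union> {b. y b \<noteq> 0}" by auto
  ultimately show ?thesis unfolding sv_space_def by (auto intro: finite_subset)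
qed

lemma sv_space_scale: "x \<in> sv_space \<Longrightarrow> (\<lambda>v. k * x v) \<in> sv_space"
proof -
  assume "x \<in> sv_space"
  moreover have "{b. k * x b \<noteq> 0} \<subseteq> {b. x b \<noteq> 0}" by auto
  ultimately show ?thesis unfolding sv_space_def by (auto intro: finite_subset)
qed

lemma sv_space_sum_units: "finite S \<Longrightarrow> (\<lambda>v. \<Sum>b\<in>S. g b * sv_unit b v) \<in> sv_space"
proof (induction S rule: finite_induct)
  case empty
  show ?case using sv_space_scale[OF sv_unit_in_space, of 0 CL] by simp
next
  case (insert x F)
  then show ?case using sv_space_add[OF sv_space_scale[OF sv_unit_in_space] insert(3), of "g x" x] by simp
qed

lemma sv_space_unit_expansion:
  assumes "x \<in> sv_space"
  shows "x = (\<lambda>v. \<Sum>b\<in>supp_sv x. x b * sv_unit b v)"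
proof
  fix v
  have "(\<Sum>b\<in>supp_sv x. x b * sv_unit b v) = (\<Sum>b\<in>supp_sv x. if v = b then x b else 0)"
    by (rule sum.cong) (auto simp: sv_unit_def)
  also have "\<dots> = x v"
    using finite_supp_sv[OF assms] by (simp add: supp_sv_def)
  finally show "x v = (\<Sum>b\<in>supp_sv x. x b * sv_unit b v)" by simp
qed

lemma sv_linear_scalar:
  assumes lin: "sv_linear \<phi>" and units: "\<And>b. \<phi> (sv_unit b) = (\<lambda>v. c * sv_unit b v)"
    and x: "x \<in> sv_space"
  shows "\<phi> x = (\<lambda>v. c * x v)"
proof -
  have add: "\<phi> (\<lambda>v. y v + z v) = (\<lambda>v. \<phi> y v + \<phi> z v)" if "y \<in> sv_space" "z \<in> sv_space" for y z
    using lin that by (simp add: sv_linear_def)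
  have scale: "\<phi> (\<lambda>v. k * y v) = (\<lambda>v. k * \<phi> y v)" if "y \<in> sv_space" for k y
    using lin that by (simp add: sv_linear_def)
  have "\<phi> (\<lambda>v. \<Sum>b\<in>S. g b * sv_unit b v) = (\<lambda>v. c * (\<Sum>b\<in>S. g b * sv_unit b v))"
    if "finite S" for S g
    using that
  proof (induction S rule: finite_induct)
    case empty
    show ?case using scale[OF sv_unit_in_space, of 0 CL] by simp
  next
    case (insert a F)
    then have "\<phi> (\<lambda>v. \<Sum>b\<in>insert a F. g b * sv_unit b v)
        = \<phi> (\<lambda>v. g a * sv_unit a v + (\<Sum>b\<in>F. g b * sv_unit b v))"
      by simp
    also have "\<dots> = (\<lambda>v. \<phi> (\<lambda>v. g a * sv_unit a v) v + \<phi> (\<lambda>v. \<Sum>b\<in>F. g b * sv_unit b v) v)"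
      by (rule add[OF sv_space_scale[OF sv_unit_in_space] sv_space_sum_units[OF insert(1)]])
    also have "\<dots> = (\<lambda>v. c * (\<Sum>b\<in>insert a F. g b * sv_unit b v))"
      using insert by (simp add: scale[OF sv_unit_in_space] units algebra_simps)
    finally show ?case .
  qed
  then show ?thesis
    using finite_supp_sv[OF x] by (subst (1 2) sv_space_unit_expansion[OF x]) blast
qed

lemma sv_bracket_units: "sv_bracket (sv_unit a) (sv_unit b) = brb a b"
  unfolding sv_bracket_def supp_sv_unit by (simp add: sv_unit_def)

lemma sv_bracket_unit_right:
  assumes "x \<in> sv_space" "finite A" "\<forall>a. a \<notin> A \<longrightarrow> x a * brb a b c = 0"
  shows "sv_bracket x (sv_unit b) c = (\<Sum>a\<in>A. x a * brb a b c)"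
proof -
  note fin = finite_supp_sv[OF assms(1)]
  have "sv_bracket x (sv_unit b) c = (\<Sum>a\<in>supp_sv x. x a * brb a b c)"
    unfolding sv_bracket_def supp_sv_unit by (simp add: sv_unit_def)
  also have "\<dots> = (\<Sum>a\<in>supp_sv x \<union> A. x a * brb a b c)"
    by (rule sum.mono_neutral_left) (use fin assms(2) in \<open>auto simp: supp_sv_def\<close>)
  also have "\<dots> = (\<Sum>a\<in>A. x a * brb a b c)"
    by (rule sum.mono_neutral_right) (use fin assms in auto)
  finally show ?thesis .
qed

lemma sv_bracket_unit_left:
  assumes "y \<in> sv_space" "finite B" "\<forall>b. b \<notin> B \<longrightarrow> y b * brb a b c = 0"
  shows "sv_bracket (sv_unit a) y c = (\<Sum>b\<in>B. y b * brb a b c)"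
proof -
  note fin = finite_supp_sv[OF assms(1)]
  have "sv_bracket (sv_unit a) y c = (\<Sum>b\<in>supp_sv y. y b * brb a b c)"
    unfolding sv_bracket_def supp_sv_unit by (simp add: sv_unit_def)
  also have "\<dots> = (\<Sum>b\<in>supp_sv y \<union> B. y b * brb a b c)"
    by (rule sum.mono_neutral_left) (use fin assms(2) in \<open>auto simp: supp_sv_def\<close>)
  also have "\<dots> = (\<Sum>b\<in>B. y b * brb a b c)"
    by (rule sum.mono_neutral_right) (use fin assms in auto)
  finally show ?thesis .
qed

lemma sv_bracket_scaled_unit_right: "sv_bracket (\<lambda>v. k * sv_unit a v) (sv_unit b) c = k * brb a b c"
  using sv_bracket_unit_right[of "\<lambda>v. k * sv_unit a v" "{a}" b c] sv_space_scale[OF sv_unit_in_space]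
  by (auto simp: sv_unit_def)

lemma sv_bracket_scaled_unit_left: "sv_bracket (sv_unit a) (\<lambda>v. k * sv_unit b v) c = k * brb a b c"
  using sv_bracket_unit_left[of "\<lambda>v. k * sv_unit b v" "{b}" a c] sv_space_scale[OF sv_unit_in_space]
  by (auto simp: sv_unit_def)

lemma brb_L0: "brb (SL 0) b = (\<lambda>x. of_int (twice_degree b) / 2 * sv_unit b x)"
  by (cases b) (auto simp: fun_eq_iff sv_unit_def)

lemma sv_bracket_L0_left:
  "y \<in> sv_space \<Longrightarrow> sv_bracket (sv_unit (SL 0)) y c = of_int (twice_degree c) / 2 * y c"
  using sv_bracket_unit_left[of y "{c}" "SL 0" c] by (simp add: brb_L0 sv_unit_def)

locale sv_half_derivation =
  fixes \<phi> :: "(sv_basis \<Rightarrow> complex) \<Rightarrow> (sv_basis \<Rightarrow> complex)"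
  assumes half_derivation: "half_derivation \<phi>"
begin

lemma in_space: "x \<in> sv_space \<Longrightarrow> \<phi> x \<in> sv_space"
  using half_derivation by (simp add: half_derivation_def sv_linear_def)

lemma additive:
  "x \<in> sv_space \<Longrightarrow> y \<in> sv_space \<Longrightarrow> \<phi> (\<lambda>b. x b + y b) = (\<lambda>b. \<phi> x b + \<phi> y b)"
  using half_derivation by (simp add: half_derivation_def sv_linear_def)

lemma homogeneous: "x \<in> sv_space \<Longrightarrow> \<phi> (\<lambda>b. k * x b) = (\<lambda>b. k * \<phi> x b)"
  using half_derivation by (simp add: half_derivation_def sv_linear_def)

lemma on_brb:
  "\<phi> (brb a b)
    = (\<lambda>c. (sv_bracket (\<phi> (sv_unit a)) (sv_unit b) c + sv_bracket (sv_unit a) (\<phi> (sv_unit b)) c) / 2)"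
  using half_derivation sv_unit_in_space[of a] sv_unit_in_space[of b] unfolding half_derivation_def
  by (metis sv_bracket_units)

lemma coeff_identity:
  assumes "brb a b = (\<lambda>x. k * sv_unit d x)" "finite A" "finite B"
    "\<forall>a'. a' \<notin> A \<longrightarrow> \<phi> (sv_unit a) a' * brb a' b c = 0"
    "\<forall>b'. b' \<notin> B \<longrightarrow> \<phi> (sv_unit b) b' * brb a b' c = 0"
  shows "2 * k * \<phi> (sv_unit d) c
    = (\<Sum>a'\<in>A. \<phi> (sv_unit a) a' * brb a' b c) + (\<Sum>b'\<in>B. \<phi> (sv_unit b) b' * brb a b' c)"
proof -
  have "\<phi> (brb a b) c = k * \<phi> (sv_unit d) c"
    using assms(1) homogeneous[OF sv_unit_in_space, of k d] by simp
  moreover have "sv_bracket (\<phi> (sv_unit a)) (sv_unit b) c = (\<Sum>a'\<in>A. \<phi> (sv_unit a) a' * brb a' b c)"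
    by (rule sv_bracket_unit_right) (use assms in_space[OF sv_unit_in_space] in auto)
  moreover have "sv_bracket (sv_unit a) (\<phi> (sv_unit b)) c = (\<Sum>b'\<in>B. \<phi> (sv_unit b) b' * brb a b' c)"
    by (rule sv_bracket_unit_left) (use assms in_space[OF sv_unit_in_space] in auto)
  ultimately show ?thesis
    by (subst (asm) on_brb) (simp add: field_simps)
qed

lemma coeff_identity_single:
  assumes "brb a b = (\<lambda>x. k * sv_unit d x)"
    "\<forall>a'. a' \<noteq> a0 \<longrightarrow> \<phi> (sv_unit a) a' * brb a' b c = 0"
    "\<forall>b'. b' \<noteq> b0 \<longrightarrow> \<phi> (sv_unit b) b' * brb a b' c = 0"
  shows "2 * k * \<phi> (sv_unit d) c = \<phi> (sv_unit a) a0 * brb a0 b c + \<phi> (sv_unit b) b0 * brb a b0 c"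
  using coeff_identity[OF assms(1), of "{a0}" "{b0}"] assms(2,3) by simp

lemma L0_coeff_SL:
  assumes "n \<noteq> 0"
  shows "\<phi> (sv_unit (SL 0)) (SL n) = 0"
proof -
  have "2 * of_int n * \<phi> (sv_unit (SN n)) (SN (2*n))
      = \<phi> (sv_unit (SL 0)) (SL n) * brb (SL n) (SN n) (SN (2*n))
        + \<phi> (sv_unit (SN n)) (SN (2*n)) * brb (SL 0) (SN (2*n)) (SN (2*n))"
    by (rule coeff_identity_single) (simp_all add: sv_basis_all fun_eq_iff sv_unit_def)
  with assms show ?thesis by simp
qed

lemma L0_coeff_SM: "\<phi> (sv_unit (SL 0)) (SM n) = 0"
proof -
  have "2 * of_int n * \<phi> (sv_unit (SN n)) (SM (2*n))
      = \<phi> (sv_unit (SL 0)) (SM n) * brb (SM n) (SN n) (SM (2*n))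
        + \<phi> (sv_unit (SN n)) (SM (2*n)) * brb (SL 0) (SM (2*n)) (SM (2*n))"
    by (rule coeff_identity_single) (simp_all add: sv_basis_all fun_eq_iff sv_unit_def)
  then show ?thesis by simp
qed

lemma L0_coeff_SN: "\<phi> (sv_unit (SL 0)) (SN n) = 0"
proof -
  have "2 * of_int n * \<phi> (sv_unit (SM n)) (SM (2*n))
      = (\<Sum>a\<in>{SL n, SN n}. \<phi> (sv_unit (SL 0)) a * brb a (SM n) (SM (2*n)))
        + \<phi> (sv_unit (SM n)) (SM (2*n)) * brb (SL 0) (SM (2*n)) (SM (2*n))"
    using coeff_identity[of "SL 0" "SM n" _ _ "{SL n, SN n}" "{SM (2*n)}"]
    by (simp add: sv_basis_all fun_eq_iff sv_unit_def)
  then have "of_int n * \<phi> (sv_unit (SL 0)) (SL n) + 2 * \<phi> (sv_unit (SL 0)) (SN n) = 0"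
    by (simp add: algebra_simps)
  then show ?thesis using L0_coeff_SL by (cases "n = 0") auto
qed

lemma L0_coeff_SY: "\<phi> (sv_unit (SL 0)) (SY m) = 0"
proof -
  define Y where "Y = \<phi> (sv_unit (SL 0)) (SY m)"
  define F1 where "F1 = \<phi> (sv_unit (SL 1)) (SY (m+1))"
  define F2 where "F2 = \<phi> (sv_unit (SL (-1))) (SY (m-1))"
  define M where "M = (of_int m :: complex)"
  have "2 * 1 * F1 = Y * brb (SY m) (SL 1) (SY (m+1)) + F1 * brb (SL 0) (SY (m+1)) (SY (m+1))"
    unfolding Y_def F1_def
    by (rule coeff_identity_single) (simp_all add: sv_basis_all fun_eq_iff sv_unit_def)
  then have e1: "(1 - 2*M) * F1 + 2 * M * Y = 0"
    unfolding M_def by (simp add: field_simps)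
  have "2 * (-1) * F2 = Y * brb (SY m) (SL (-1)) (SY (m-1)) + F2 * brb (SL 0) (SY (m-1)) (SY (m-1))"
    unfolding Y_def F2_def
    by (rule coeff_identity_single) (simp_all add: sv_basis_all fun_eq_iff sv_unit_def)
  then have e2: "(2*M + 3) * F2 - 2 * (M + 1) * Y = 0"
    unfolding M_def by (simp add: field_simps)
  have "2 * (-2) * Y = F1 * brb (SY (m+1)) (SL (-1)) (SY m) + F2 * brb (SL 1) (SY (m-1)) (SY m)"
    unfolding Y_def F1_def F2_def
    by (rule coeff_identity_single) (simp_all add: sv_basis_all fun_eq_iff sv_unit_def)
  then have e3: "-4 * Y + (M + 2) * F1 - (M - 1) * F2 = 0"
    unfolding M_def by (simp add: field_simps)
  have "-10 * Y = (1-2*M)*(2*M+3) * (-4*Y + (M+2)*F1 - (M-1)*F2)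
      - (M+2)*(2*M+3) * ((1-2*M)*F1 + 2*M*Y) + (M-1)*(1-2*M) * ((2*M+3)*F2 - 2*(M+1)*Y)"
    by (simp add: algebra_simps)
  also have "\<dots> = 0" using e1 e2 e3 by simp
  finally show ?thesis unfolding Y_def by simp
qed

lemma L0_coeff_central:
  "\<phi> (sv_unit (SL 0)) CL = 0" "\<phi> (sv_unit (SL 0)) CLN = 0" "\<phi> (sv_unit (SL 0)) CN = 0"
proof -
  have "2 * (-2) * \<phi> (sv_unit (SL 0)) CL
      = \<phi> (sv_unit (SL 1)) (SL 1) * brb (SL 1) (SL (-1)) CL
        + \<phi> (sv_unit (SL (-1))) (SL (-1)) * brb (SL 1) (SL (-1)) CL"
    by (rule coeff_identity_single) (simp_all add: sv_basis_all fun_eq_iff sv_unit_def)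
  then show "\<phi> (sv_unit (SL 0)) CL = 0" by simp
  have "2 * (-2) * \<phi> (sv_unit (SL 0)) CN
      = \<phi> (sv_unit (SL 1)) (SL 1) * brb (SL 1) (SL (-1)) CN
        + \<phi> (sv_unit (SL (-1))) (SL (-1)) * brb (SL 1) (SL (-1)) CN"
    by (rule coeff_identity_single) (simp_all add: sv_basis_all fun_eq_iff sv_unit_def)
  then show "\<phi> (sv_unit (SL 0)) CN = 0" by simp
  have "2 * 1 * \<phi> (sv_unit (SL 1)) (SN 1)
      = \<phi> (sv_unit (SL 0)) (SN 1) * brb (SN 1) (SL 1) (SN 1)
        + \<phi> (sv_unit (SL 1)) (SN 1) * brb (SL 0) (SN 1) (SN 1)"
    by (rule coeff_identity_single) (simp_all add: sv_basis_all fun_eq_iff sv_unit_def)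
  then have "\<phi> (sv_unit (SL 1)) (SN 1) = 0" by simp
  moreover have "2 * (-2) * \<phi> (sv_unit (SL 0)) CLN
      = \<phi> (sv_unit (SL 1)) (SN 1) * brb (SN 1) (SL (-1)) CLN
        + \<phi> (sv_unit (SL (-1))) (SL (-1)) * brb (SL 1) (SL (-1)) CLN"
    by (rule coeff_identity_single) (simp_all add: sv_basis_all fun_eq_iff sv_unit_def)
  ultimately show "\<phi> (sv_unit (SL 0)) CLN = 0" by simp
qed

definition scalar :: complex where
  "scalar = \<phi> (sv_unit (SL 0)) (SL 0)"

abbreviation scalar_on :: "sv_basis \<Rightarrow> bool" where
  "scalar_on b \<equiv> \<phi> (sv_unit b) = (\<lambda>v. scalar * sv_unit b v)"

lemma scalar_on_L0: "scalar_on (SL 0)"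
proof
  fix v show "\<phi> (sv_unit (SL 0)) v = scalar * sv_unit (SL 0) v"
    by (cases v)
       (auto simp: scalar_def sv_unit_apply L0_coeff_SL L0_coeff_SM L0_coeff_SN L0_coeff_SY L0_coeff_central)
qed

lemma coeff_off_double_degree:
  assumes "twice_degree c \<noteq> 2 * twice_degree b"
  shows "\<phi> (sv_unit b) c = scalar * sv_unit b c"
proof -
  let ?d = "\<lambda>x. of_int (twice_degree x) / 2 :: complex"
  have "\<phi> (brb (SL 0) b) = (\<lambda>x. ?d b * \<phi> (sv_unit b) x)"
    unfolding brb_L0 by (rule homogeneous[OF sv_unit_in_space])
  moreover have "sv_bracket (\<phi> (sv_unit (SL 0))) (sv_unit b) c = scalar * (?d b * sv_unit b c)"
    unfolding scalar_on_L0 sv_bracket_scaled_unit_right brb_L0 ..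
  moreover have "sv_bracket (sv_unit (SL 0)) (\<phi> (sv_unit b)) c = ?d c * \<phi> (sv_unit b) c"
    by (rule sv_bracket_L0_left[OF in_space[OF sv_unit_in_space]])
  ultimately have "?d b * \<phi> (sv_unit b) c = (scalar * (?d b * sv_unit b c) + ?d c * \<phi> (sv_unit b) c) / 2"
    by (subst (asm) on_brb) (metis (no_types, lifting))
  then have eq: "of_int (2 * twice_degree b - twice_degree c) * \<phi> (sv_unit b) c
      = scalar * of_int (twice_degree b) * sv_unit b c"
    by (simp add: field_simps)
  show ?thesis
  proof (cases "c = b")
    case True
    with assms have "twice_degree b \<noteq> 0" by auto
    with eq True show ?thesis by (simp add: sv_unit_apply)
  next
    case False
    have "(of_int (2 * twice_degree b - twice_degree c) :: complex) \<noteq> 0"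
      unfolding of_int_eq_0_iff using assms by simp
    with eq False show ?thesis by (simp add: sv_unit_apply)
  qed
qed

lemma scalar_on_if_double_degree_coeffs_vanish:
  assumes "twice_degree b = j" "j \<noteq> 0"
    and "\<phi> (sv_unit b) (SL j) = 0" "\<phi> (sv_unit b) (SM j) = 0" "\<phi> (sv_unit b) (SN j) = 0"
  shows "scalar_on b"
proof
  fix v show "\<phi> (sv_unit b) v = scalar * sv_unit b v"
  proof (cases "twice_degree v = 2 * twice_degree b")
    case False
    then show ?thesis by (rule coeff_off_double_degree)
  next
    case True
    with assms(1,2) have "v \<noteq> b" by auto
    moreover from True assms(1,2) have "v \<in> {SL j, SM j, SN j}"
      by (cases v) (auto, presburger)
    ultimately show ?thesis using assms(3-5) by (auto simp: sv_unit_apply)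
  qed
qed

lemma scalar_on_SL:
  assumes "n \<noteq> 0"
  shows "scalar_on (SL n)"
proof (rule scalar_on_if_double_degree_coeffs_vanish)
  have off4: "\<phi> (sv_unit (SL (4*n))) c = 0" if "c \<in> {SL (5*n), SM (5*n), SN (5*n)}" for c
    using coeff_off_double_degree[of c "SL (4*n)"] that assms by (auto simp: sv_unit_apply)
  have off3: "\<phi> (sv_unit (SL (3*n))) c = 0" if "c \<in> {SL (4*n), SM (4*n), SN (4*n)}" for c
    using coeff_off_double_degree[of c "SL (3*n)"] that assms by (auto simp: sv_unit_apply)
  have "2 * of_int (2*n) * \<phi> (sv_unit (SL (4*n))) (SL (5*n))
      = \<phi> (sv_unit (SL n)) (SL (2*n)) * brb (SL (2*n)) (SL (3*n)) (SL (5*n))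
        + \<phi> (sv_unit (SL (3*n))) (SL (4*n)) * brb (SL n) (SL (4*n)) (SL (5*n))"
    by (rule coeff_identity_single) (use assms in \<open>simp_all add: sv_basis_all fun_eq_iff sv_unit_def\<close>)
  with off3 off4 assms show "\<phi> (sv_unit (SL n)) (SL (2*n)) = 0" by simp
  have "2 * of_int (2*n) * \<phi> (sv_unit (SL (4*n))) (SM (5*n))
      = \<phi> (sv_unit (SL n)) (SM (2*n)) * brb (SM (2*n)) (SL (3*n)) (SM (5*n))
        + \<phi> (sv_unit (SL (3*n))) (SM (4*n)) * brb (SL n) (SM (4*n)) (SM (5*n))"
    by (rule coeff_identity_single) (use assms in \<open>simp_all add: sv_basis_all fun_eq_iff sv_unit_def\<close>)
  with off3 off4 assms show "\<phi> (sv_unit (SL n)) (SM (2*n)) = 0" by simp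
  have "2 * of_int (2*n) * \<phi> (sv_unit (SL (4*n))) (SN (5*n))
      = \<phi> (sv_unit (SL n)) (SN (2*n)) * brb (SN (2*n)) (SL (3*n)) (SN (5*n))
        + \<phi> (sv_unit (SL (3*n))) (SN (4*n)) * brb (SL n) (SN (4*n)) (SN (5*n))"
    by (rule coeff_identity_single) (use assms in \<open>simp_all add: sv_basis_all fun_eq_iff sv_unit_def\<close>)
  with off3 off4 assms show "\<phi> (sv_unit (SL n)) (SN (2*n)) = 0" by simp
qed (use assms in auto)

lemma scalar_on_if_L_bracket_unit:
  assumes deg: "twice_degree b = j" "j \<noteq> 0"
    and bracket: "brb (SL (2*j)) b = (\<lambda>x. k * sv_unit d x)" "twice_degree d = 5 * j"
  shows "scalar_on b"
proof (rule scalar_on_if_double_degree_coeffs_vanish[OF deg])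
  have L: "scalar_on (SL (2*j))" using scalar_on_SL deg(2) by simp
  have vanish: "\<phi> (sv_unit b) b0 = 0"
    if "brb (SL (2*j)) b0 c \<noteq> 0" "\<forall>b'. b' \<noteq> b0 \<longrightarrow> brb (SL (2*j)) b' c = 0"
      "twice_degree c = 6 * j" for b0 c
  proof -
    have "c \<noteq> d" using that(3) bracket(2) deg(2) by auto
    have "2 * k * \<phi> (sv_unit d) c
        = \<phi> (sv_unit (SL (2*j))) (SL (2*j)) * brb (SL (2*j)) b c + \<phi> (sv_unit b) b0 * brb (SL (2*j)) b0 c"
      by (rule coeff_identity_single) (use L that(2) bracket(1) in \<open>auto simp: sv_unit_apply\<close>)
    moreover have "\<phi> (sv_unit d) c = 0"
      using coeff_off_double_degree[of c d] \<open>c \<noteq> d\<close> that(3) bracket(2) deg(2)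
      by (simp add: sv_unit_apply)
    moreover have "brb (SL (2*j)) b c = 0" using bracket(1) \<open>c \<noteq> d\<close> by (simp add: sv_unit_apply)
    ultimately show ?thesis using that(1) by simp
  qed
  show "\<phi> (sv_unit b) (SL j) = 0" "\<phi> (sv_unit b) (SM j) = 0" "\<phi> (sv_unit b) (SN j) = 0"
    by (rule vanish[where c="SL (3*j)"] vanish[where c="SM (3*j)"] vanish[where c="SN (3*j)"],
        use deg(2) in \<open>simp_all add: sv_basis_all\<close>)+
qed

lemma scalar_on_SM: "n \<noteq> 0 \<Longrightarrow> scalar_on (SM n)"
  by (rule scalar_on_if_L_bracket_unit[where j="2*n" and k="of_int n" and d="SM (5*n)"])
     (simp_all add: fun_eq_iff sv_unit_apply)

lemma scalar_on_SN: "n \<noteq> 0 \<Longrightarrow> scalar_on (SN n)"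
  by (rule scalar_on_if_L_bracket_unit[where j="2*n" and k="of_int n" and d="SN (5*n)"])
     (simp_all add: fun_eq_iff sv_unit_apply)

lemma scalar_on_SY: "scalar_on (SY n)"
proof (rule scalar_on_if_L_bracket_unit[where j="2*n+1" and d="SY (5*n+2)"])
  show "2*n+1 \<noteq> 0" by presburger
qed (auto simp: fun_eq_iff sv_unit_apply algebra_simps)

lemma scalar_on_bracket_component:
  assumes "brb a b = (\<lambda>x. p * sv_unit u x + q * sv_unit w x)" "q \<noteq> 0"
    and "scalar_on a" "scalar_on b" "scalar_on u"
  shows "scalar_on w"
proof
  fix v
  have "\<phi> (brb a b) = (\<lambda>x. p * \<phi> (sv_unit u) x + q * \<phi> (sv_unit w) x)"
    unfolding assms(1)
    by (simp add: additive[OF sv_space_scale[OF sv_unit_in_space] sv_space_scale[OF sv_unit_in_space]]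
        homogeneous[OF sv_unit_in_space])
  moreover have "\<phi> (brb a b) = (\<lambda>c. scalar * brb a b c)"
    using on_brb[of a b] assms(3,4) sv_bracket_scaled_unit_right sv_bracket_scaled_unit_left by simp
  ultimately have "p * \<phi> (sv_unit u) v + q * \<phi> (sv_unit w) v = scalar * (p * sv_unit u v + q * sv_unit w v)"
    using assms(1) by (metis (no_types, lifting))
  then have "q * \<phi> (sv_unit w) v = q * (scalar * sv_unit w v)"
    using assms(5) by (simp add: algebra_simps)
  then show "\<phi> (sv_unit w) v = scalar * sv_unit w v" using assms(2) by simp
qed

lemma scalar_on_units: "scalar_on b"
proof -
  have M0: "scalar_on (SM 0)"
    by (rule scalar_on_bracket_component[where a="SY 0" and b="SY (-1)" and p=0 and u="SL 0" and q=1])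
       (simp_all add: fun_eq_iff sv_unit_apply scalar_on_SY scalar_on_L0)
  have N0: "scalar_on (SN 0)"
    by (rule scalar_on_bracket_component[where a="SL 1" and b="SN (-1)" and p=0 and u="SL 0" and q="-1"])
       (simp_all add: fun_eq_iff sv_unit_apply scalar_on_SN scalar_on_SL scalar_on_L0)
  have CL: "scalar_on CL"
    by (rule scalar_on_bracket_component[where a="SL 2" and b="SL (-2)" and p="-4" and u="SL 0" and q="1/2"])
       (simp_all add: fun_eq_iff sv_unit_apply scalar_on_SL scalar_on_L0)
  have CLN: "scalar_on CLN"
    by (rule scalar_on_bracket_component[where a="SL 2" and b="SN (-2)" and p="-2" and u="SN 0" and q=2])
       (simp_all add: fun_eq_iff sv_unit_apply scalar_on_SL scalar_on_SN N0)
  have CN: "scalar_on CN"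
    by (rule scalar_on_bracket_component[where a="SN 1" and b="SN (-1)" and p=0 and u="SL 0" and q="-1"])
       (simp_all add: fun_eq_iff sv_unit_apply scalar_on_SN scalar_on_L0)
  show ?thesis
  proof (cases b)
    case (SL n) then show ?thesis using scalar_on_L0 scalar_on_SL by (cases "n = 0") auto
  next
    case (SM n) then show ?thesis using M0 scalar_on_SM by (cases "n = 0") auto
  next
    case (SN n) then show ?thesis using N0 scalar_on_SN by (cases "n = 0") auto
  qed (use scalar_on_SY CL CLN CN in auto)
qed

end

theorem mainTheorem3:
  assumes "half_derivation \<phi>"
  shows "\<exists>c::complex. \<forall>x\<in>sv_space. \<phi> x = (\<lambda>b. c * x b)"
proof -
  interpret sv_half_derivation \<phi> by (rule sv_half_derivation.intro[OF assms])
  have "sv_linear \<phi>" using assms by (simp add: half_derivation_def)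
  then show ?thesis using sv_linear_scalar scalar_on_units by blast
qed

end
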